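(* Assume $J$ satisfies (J1), (J2), (J5) and (JP), and $h\equiv0$. Let $u$ be a minimizer for $H$ in $Q_\ell(q)$ for some $q\in\mathbb Z^d$ and $\ell\in\mathbb N$. If $q\in\partial u$, then $$\min\Big\{\#\big(\{u=-1\}\cap Q_\ell(q)\big),\ \#\big(\{u=1\}\cap Q_\ell(q)\big)\Big\}\ge\bar c\,\ell^d,$$ for a constant $\bar c>0$ depending only on $d$, $s$, $\lambda$ and $\Lambda$.
   Context: Fix $d\ge2$, $|x|:=\sum_n|x_n|$ ($\ell^1$ norm), $|x|_\infty:=\max_n|x_n|$. Configurations are maps $u:\mathbb Z^d\to\{-1,1\}$; $\partial u:=\{i: u_i=1\text{ and }\exists j,\ |i-j|=1,\ u_j=-1\}$; $\{u=\pm1\}:=\{i\in\mathbb Z^d:u_i=\pm1\}$. With $h\equiv0$, for finite $\Gamma$: $H_\Gamma(u):=\sum_{(i,j)\in\mathbb Z^{2d}\setminus(\mathbb Z^d\setminus\Gamma)^2}J_{ij}(1-u_iu_j)$; $u$ is a minimizer for $H$ in $\Gamma$ if $H_\Gamma(u)\le H_\Gamma(v)$ for all $v$ agreeing with $u$ outside $\Gamma$. $Q_\ell(q):=\{i\in\mathbb Z^d:|i-q|_\infty\le\ell\}$. Conditions on $J:\mathbb Z^d\times\mathbb Z^d\to[0,\infty)$: (J1) $J_{ij}=J_{ji}$; (J2) $J_{ii}=0$; (J5) $J_{ij}=J_{i'j'}$ whenever $i-i'=j-j'\in\tau\mathbb Z^d$, for some $\tau\in\mathbb N$; (JP) $\lambda|i-j|^{-d-s}\le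 J_{ij}\le\Lambda|i-j|^{-d-s}$ for all $i\ne j$, for some $s\in(0,1)$, $\Lambda\ge\lambda>0$. *)

theory Defs
  imports "HOL-Analysis.Analysis"
begin

text \<open>Points of Z^d are vectors int^'n with d = CARD('n). Configurations are
maps u :: int^'n \<Rightarrow> int with values in {-1,1}.\<close>

definition l1norm :: "int^'n \<Rightarrow> int" where
  "l1norm x = (\<Sum>k\<in>UNIV. \<bar>x $ k\<bar>)"

definition linfnorm :: "int^'n \<Rightarrow> int" where
  "linfnorm x = Max (range (\<lambda>k. \<bar>x $ k\<bar>))"

definition is_config :: "(int^'n \<Rightarrow> int) \<Rightarrow> bool" where
  "is_config u \<longleftrightarrow> (\<forall>i. u i = 1 \<or> u i = -1)"

definition bdry :: "(int^'n \<Rightarrow> int) \<Rightarrow> (int^'n) set" where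
  "bdry u = {i. u i = 1 \<and> (\<exists>j. l1norm (i - j) = 1 \<and> u j = -1)}"

definition cube :: "nat \<Rightarrow> int^'n \<Rightarrow> (int^'n) set" where
  "cube l q = {i. linfnorm (i - q) \<le> int l}"

text \<open>Energy with h = 0 (as an extended nonnegative real; it is finite under (JP)).\<close>
definition Hen :: "(int^'n \<Rightarrow> int^'n \<Rightarrow> real) \<Rightarrow> (int^'n) set \<Rightarrow> (int^'n \<Rightarrow> int) \<Rightarrow> ennreal" where
  "Hen J \<Gamma> u = infsum (\<lambda>p. ennreal (J (fst p) (snd p) * (1 - real_of_int (u (fst p) * u (snd p)))))
                   (UNIV - (UNIV - \<Gamma>) \<times> (UNIV - \<Gamma>))"

definition minimizer :: "(int^'n \<Rightarrow> int^'n \<Rightarrow> real) \<Rightarrow> (int^'n) set \<Rightarrow> (int^'n \<Rightarrow> int) \<Rightarrow> bool" where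
  "minimizer J \<Gamma> u \<longleftrightarrow> (\<forall>v. is_config v \<longrightarrow> (\<forall>i. i \<notin> \<Gamma> \<longrightarrow> v i = u i) \<longrightarrow> Hen J \<Gamma> u \<le> Hen J \<Gamma> v)"

definition J1 :: "(int^'n \<Rightarrow> int^'n \<Rightarrow> real) \<Rightarrow> bool" where
  "J1 J \<longleftrightarrow> (\<forall>i j. J i j = J j i)"

definition J2 :: "(int^'n \<Rightarrow> int^'n \<Rightarrow> real) \<Rightarrow> bool" where
  "J2 J \<longleftrightarrow> (\<forall>i. J i i = 0)"

definition J5 :: "(int^'n \<Rightarrow> int^'n \<Rightarrow> real) \<Rightarrow> bool" where
  "J5 J \<longleftrightarrow> (\<exists>\<tau>::nat. \<tau> \<ge> 1 \<and> (\<forall>i i' j j'. i - i' = j - j' \<and> (\<forall>k. int \<tau> dvd (i - i') $ k)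
                  \<longrightarrow> J i j = J i' j'))"

definition JP :: "real \<Rightarrow> real \<Rightarrow> real \<Rightarrow> (int^'n \<Rightarrow> int^'n \<Rightarrow> real) \<Rightarrow> bool" where
  "JP s lam Lam J \<longleftrightarrow> (\<forall>i j. i \<noteq> j \<longrightarrow>
      lam * real_of_int (l1norm (i - j)) powr (- (real CARD('n) + s)) \<le> J i j \<and>
      J i j \<le> Lam * real_of_int (l1norm (i - j)) powr (- (real CARD('n) + s)))"

end

theory Submission
  imports Defs
begin

text \<open>
  For \<open>r \<le> \<ell>\<close> let \<open>A\<^sub>r\<close> be the set of minus spins in \<open>Q\<^sub>r(q)\<close>. Flipping \<open>A\<^sub>r\<close> to plus is an
  admissible competitor, so minimality bounds the interaction of \<open>A\<^sub>r\<close> with its complement by twice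
  its interaction with the minus spins outside \<open>A\<^sub>r\<close>; these lie outside \<open>Q\<^sub>r(q)\<close>. The fractional
  isoperimetric inequality bounds the former from below by \<open>c |A\<^sub>r|\<^bsup>1-s/d\<^esup>\<close>, the decay of \<open>J\<close> bounds
  the latter by \<open>C \<Sum>\<^sub>i\<^sub>\<in>\<^sub>A\<^sub>r (r + 1 - |i - q|\<^sub>\<infinity>)\<^bsup>-s\<^esup>\<close>. Summing over \<open>r \<in> [R, 2R]\<close> yields the discrete
  differential inequality \<open>|A\<^sub>2\<^sub>R| \<ge> c R\<^sup>s |A\<^sub>R|\<^bsup>1-s/d\<^esup>\<close>, and since \<open>A\<^sub>1 \<noteq> \<emptyset>\<close> (the point \<open>q\<close> has a
  minus neighbour) dyadic iteration gives \<open>|A\<^sub>\<ell>| \<ge> c \<ell>\<^sup>d\<close>. The plus spins are handled by applying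
  the same bound to the minimizer \<open>-u\<close>.
\<close>

section \<open>The norms on the lattice\<close>

lemma linfnorm_component_le: "\<bar>x $ k\<bar> \<le> linfnorm (x::int^'n)"
  unfolding linfnorm_def by (rule Max_ge) auto

lemma linfnorm_attained: "\<exists>k. linfnorm (x::int^'n) = \<bar>x $ k\<bar>"
proof -
  have "linfnorm x \<in> range (\<lambda>k. \<bar>x $ k\<bar>)"
    unfolding linfnorm_def by (rule Max_in) auto
  then show ?thesis by auto
qed

lemma linfnorm_le_iff: "linfnorm (x::int^'n) \<le> c \<longleftrightarrow> (\<forall>k. \<bar>x $ k\<bar> \<le> c)"
  using linfnorm_component_le linfnorm_attained by (metis order_trans)

lemma linfnorm_nonneg: "0 \<le> linfnorm (x::int^'n)"
  using linfnorm_component_le[of x] by (meson abs_ge_zero order_trans)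

lemma linfnorm_triangle: "linfnorm ((x::int^'n) + y) \<le> linfnorm x + linfnorm y"
  unfolding linfnorm_le_iff
  by (metis abs_triangle_ineq add_mono linfnorm_component_le order_trans vector_add_component)

lemma linfnorm_minus_commute: "linfnorm ((x::int^'n) - y) = linfnorm (y - x)"
  unfolding linfnorm_def by (simp add: abs_minus_commute)

lemma l1norm_minus_commute: "l1norm ((x::int^'n) - y) = l1norm (y - x)"
  unfolding l1norm_def by (simp add: abs_minus_commute)

lemma linfnorm_le_l1norm: "linfnorm (x::int^'n) \<le> l1norm x"
proof -
  obtain k where "linfnorm x = \<bar>x $ k\<bar>" using linfnorm_attained by blast
  also have "\<dots> \<le> (\<Sum>k\<in>UNIV. \<bar>x $ k\<bar>)" by (rule member_le_sum) auto
  finally show ?thesis unfolding l1norm_def .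
qed

lemma l1norm_le_linfnorm: "l1norm (x::int^'n) \<le> int CARD('n) * linfnorm x"
proof -
  have "(\<Sum>k\<in>UNIV. \<bar>x $ k\<bar>) \<le> (\<Sum>k\<in>(UNIV::'n set). linfnorm x)"
    by (rule sum_mono) (rule linfnorm_component_le)
  then show ?thesis unfolding l1norm_def by simp
qed

lemma linfnorm_eq_0_iff: "linfnorm (x::int^'n) = 0 \<longleftrightarrow> x = 0"
  using linfnorm_le_iff[of x 0] linfnorm_nonneg[of x] by (auto simp: vec_eq_iff)

lemma linfnorm_zero [simp]: "linfnorm (0::int^'n) = 0"
  by (simp add: linfnorm_eq_0_iff)

lemma linfnorm_diff_ge_1: "x \<noteq> y \<Longrightarrow> 1 \<le> linfnorm ((x::int^'n) - y)"
  using linfnorm_eq_0_iff[of "x - y"] linfnorm_nonneg[of "x - y"] by simp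

lemma finite_card_linfnorm_ball:
  assumes "0 \<le> R"
  shows "finite {x::int^'n. linfnorm (x - c) \<le> R}"
    and "card {x::int^'n. linfnorm (x - c) \<le> R} = nat (2 * R + 1) ^ CARD('n)"
proof -
  have bij: "bij_betw (\<lambda>x. vec_nth (x - c)) {x::int^'n. linfnorm (x - c) \<le> R} (PiE UNIV (\<lambda>_. {-R..R}))"
  proof (rule bij_betw_imageI)
    show "inj_on (\<lambda>x. vec_nth (x - c)) {x::int^'n. linfnorm (x - c) \<le> R}"
      by (rule inj_onI) (metis diff_add_cancel vec_nth_inject)
    show "(\<lambda>x. vec_nth (x - c)) ` {x. linfnorm (x - c) \<le> R} = PiE UNIV (\<lambda>_. {-R..R})"
    proof (intro equalityI subsetI)
      fix f assume "f \<in> (\<lambda>x. vec_nth (x - c)) ` {x::int^'n. linfnorm (x - c) \<le> R}"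
      then obtain x where x: "linfnorm (x - c) \<le> R" "f = vec_nth (x - c)" by auto
      have "f k \<in> {-R..R}" for k
      proof -
        have "\<bar>(x - c) $ k\<bar> \<le> R" using x(1) linfnorm_le_iff by blast
        then show ?thesis using x(2) by (auto simp: abs_le_iff)
      qed
      then show "f \<in> PiE UNIV (\<lambda>_. {-R..R})" by (simp add: PiE_iff)
    next
      fix f assume f: "f \<in> PiE UNIV (\<lambda>_::'n. {-R..R})"
      have "\<bar>f k\<bar> \<le> R" for k
      proof -
        have "f k \<in> {-R..R}" using f by (simp add: PiE_iff)
        then show ?thesis by (auto simp: abs_le_iff)
      qed
      then have "linfnorm ((vec_lambda f + c) - c) \<le> R" by (simp add: linfnorm_le_iff)
      then show "f \<in> (\<lambda>x. vec_nth (x - c)) ` {x. linfnorm (x - c) \<le> R}"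
        by (intro image_eqI[of _ _ "vec_lambda f + c"]) auto
    qed
  qed
  have "finite (PiE (UNIV::'n set) (\<lambda>_. {-R..R}))" by (rule finite_PiE) auto
  then show "finite {x::int^'n. linfnorm (x - c) \<le> R}" using bij bij_betw_finite by blast
  have "card (PiE (UNIV::'n set) (\<lambda>_. {-R..R})) = nat (2 * R + 1) ^ CARD('n)"
    by (simp add: card_PiE)
  then show "card {x::int^'n. linfnorm (x - c) \<le> R} = nat (2 * R + 1) ^ CARD('n)"
    using bij bij_betw_same_card by metis
qed

lemma finite_cube: "finite (cube l (q::int^'n))"
  unfolding cube_def using finite_card_linfnorm_ball(1)[of "int l" q] by simp

section \<open>A discrete differential inequality\<close>

lemma powr_increment_ge:
  fixes s :: real and n :: nat
  assumes "0 < s" "s < 1" "1 \<le> n"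
  shows "(1 - s) * real n powr (-s) \<le> real n powr (1 - s) - (real n - 1) powr (1 - s)"
proof (cases "n = 1")
  case True
  then show ?thesis using assms by simp
next
  case False
  define x where "x = real n"
  have x2: "2 \<le> x" using False assms unfolding x_def by auto
  have "\<And>z. x - 1 \<le> z \<Longrightarrow> z \<le> x \<Longrightarrow>
      ((\<lambda>z. z powr (1 - s)) has_real_derivative (1 - s) * z powr (1 - s - 1)) (at z)"
    using x2 by (intro has_real_derivative_powr) auto
  from MVT2[of "x - 1" x "\<lambda>z. z powr (1 - s)", OF _ this] obtain z where z: "x - 1 < z" "z < x"
      "x powr (1 - s) - (x - 1) powr (1 - s) = (x - (x - 1)) * ((1 - s) * z powr (1 - s - 1))"
    by auto
  have "x powr (-s) \<le> z powr (-s)"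
    using z x2 assms by (auto simp: powr_minus divide_simps intro!: powr_mono2)
  then show ?thesis using z assms unfolding x_def[symmetric] by (auto intro!: mult_left_mono)
qed

lemma sum_shifted_powr_le:
  fixes s :: real and g N :: nat
  assumes s: "0 < s" "s < 1"
  shows "(\<Sum>r\<in>{g..N}. real (r + 1 - g) powr (-s)) \<le> real (N + 1 - g) powr (1 - s) / (1 - s)"
proof (induction N)
  case 0
  then show ?case using s by (cases "g = 0") auto
next
  case (Suc N)
  show ?case
  proof (cases "g \<le> Suc N")
    case True
    then have "1 \<le> Suc N + 1 - g" by simp
    from powr_increment_ge[OF s this]
    have incr: "(1 - s) * real (Suc N + 1 - g) powr (-s)
        \<le> real (Suc N + 1 - g) powr (1 - s) - real (N + 1 - g) powr (1 - s)"
      using True by (simp add: of_nat_diff algebra_simps)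
    have "(\<Sum>r\<in>{g..Suc N}. real (r + 1 - g) powr (-s))
        = real (Suc N + 1 - g) powr (-s) + (\<Sum>r\<in>{g..N}. real (r + 1 - g) powr (-s))"
      using True by (simp add: atLeastAtMostSuc_conv)
    also have "\<dots> \<le> real (Suc N + 1 - g) powr (-s) + real (N + 1 - g) powr (1 - s) / (1 - s)"
      using Suc.IH by simp
    also have "\<dots> = ((1 - s) * real (Suc N + 1 - g) powr (-s) + real (N + 1 - g) powr (1 - s)) / (1 - s)"
      using s by (simp add: field_simps)
    also have "\<dots> \<le> real (Suc N + 1 - g) powr (1 - s) / (1 - s)"
      using incr s by (intro divide_right_mono) auto
    finally show ?thesis .
  qed simp
qed

text \<open>In the application \<open>g i\<close> is the \<open>\<ell>\<^sup>\<infinity>\<close>-distance from \<open>i\<close> to \<open>q\<close>, so that \<open>sublevel B g r\<close>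
  is the set \<open>A\<^sub>r\<close> of minus spins in \<open>Q\<^sub>r(q)\<close>.\<close>

definition sublevel :: "'a set \<Rightarrow> ('a \<Rightarrow> nat) \<Rightarrow> nat \<Rightarrow> 'a set" where
  "sublevel B g r = {i \<in> B. g i \<le> r}"

lemma finite_sublevel: "finite B \<Longrightarrow> finite (sublevel B g r)"
  unfolding sublevel_def by simp

lemma card_sublevel_mono: "finite B \<Longrightarrow> r \<le> r' \<Longrightarrow> card (sublevel B g r) \<le> card (sublevel B g r')"
  unfolding sublevel_def by (auto intro!: card_mono)

lemma sum_sublevel_powr_le:
  assumes fin: "finite B" and s: "0 < s" "s < 1"
  shows "(\<Sum>r\<le>N. \<Sum>i\<in>sublevel B g r. real (r + 1 - g i) powr (-s))
     \<le> real (card (sublevel B g N)) * (real (N + 1) powr (1 - s) / (1 - s))"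
proof -
  have "(\<Sum>r\<le>N. \<Sum>i\<in>sublevel B g r. real (r + 1 - g i) powr (-s))
      = (\<Sum>i\<in>B. \<Sum>r\<in>{r\<in>{..N}. g i \<le> r}. real (r + 1 - g i) powr (-s))"
    unfolding sublevel_def by (rule sum.swap_restrict) (use fin in auto)
  also have "\<dots> = (\<Sum>i\<in>B. \<Sum>r\<in>{g i..N}. real (r + 1 - g i) powr (-s))"
    by (intro sum.cong) auto
  also have "\<dots> = (\<Sum>i\<in>sublevel B g N. \<Sum>r\<in>{g i..N}. real (r + 1 - g i) powr (-s))"
    unfolding sublevel_def using fin by (intro sum.mono_neutral_right) auto
  also have "\<dots> \<le> (\<Sum>i\<in>sublevel B g N. real (N + 1) powr (1 - s) / (1 - s))"
  proof (rule sum_mono)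
    fix i
    have "(\<Sum>r\<in>{g i..N}. real (r + 1 - g i) powr (-s)) \<le> real (N + 1 - g i) powr (1 - s) / (1 - s)"
      by (rule sum_shifted_powr_le[OF s])
    also have "\<dots> \<le> real (N + 1) powr (1 - s) / (1 - s)"
      using s by (intro divide_right_mono powr_mono2) auto
    finally show "(\<Sum>r\<in>{g i..N}. real (r + 1 - g i) powr (-s)) \<le> real (N + 1) powr (1 - s) / (1 - s)" .
  qed
  finally show ?thesis by simp
qed

definition doubling_const :: "real \<Rightarrow> real \<Rightarrow> real" where
  "doubling_const K s = (1 - s) / (3 * K)"

text \<open>The bound \<open>a \<le> 1\<close> starts the dyadic induction at \<open>|A\<^sub>1| \<ge> 1\<close>; the bound
  \<open>a \<le> (c/2\<^sup>d)\<^bsup>d/s\<^esup>\<close> makes the doubling inequality propagate \<open>|A\<^sub>R| \<ge> a R\<^sup>d\<close> to \<open>2R\<close>.\<close>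

definition dyadic_const :: "real \<Rightarrow> real \<Rightarrow> nat \<Rightarrow> real" where
  "dyadic_const K s d = min 1 ((doubling_const K s / 2 ^ d) powr (d / s))"

lemma dyadic_const_pos: "0 < K \<Longrightarrow> s < 1 \<Longrightarrow> 0 < dyadic_const K s d"
  unfolding dyadic_const_def doubling_const_def by simp

lemma sublevel_doubling_sum:
  fixes B :: "'a set" and g :: "'a \<Rightarrow> nat" and d L R :: nat
  defines "V \<equiv> \<lambda>r. real (card (sublevel B g r))"
  assumes fin: "finite B" and s: "0 < s" "s < 1" and d: "1 \<le> d" and K: "0 < K"
    and H: "\<And>r. 1 \<le> r \<Longrightarrow> r \<le> L \<Longrightarrow>
              V r powr (1 - s / d) \<le> K * (\<Sum>i\<in>sublevel B g r. real (r + 1 - g i) powr (-s))"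
    and R: "1 \<le> R" "2 * R \<le> L"
  shows "doubling_const K s * real (R + 1) * V R powr (1 - s / d) \<le> real R powr (1 - s) * V (2 * R)"
proof -
  let ?S = "\<lambda>r. \<Sum>i\<in>sublevel B g r. real (r + 1 - g i) powr (-s)"
  have three: "real (2 * R + 1) powr (1 - s) \<le> 3 * real R powr (1 - s)"
  proof -
    have "real (2 * R + 1) powr (1 - s) \<le> (3 * real R) powr (1 - s)"
      using s R by (intro powr_mono2) auto
    also have "\<dots> = 3 powr (1 - s) * real R powr (1 - s)" by (simp add: powr_mult)
    also have "3 powr (1 - s) \<le> (3::real)" using powr_mono[of "1 - s" 1 3] s by simp
    finally show ?thesis by (simp add: mult_right_mono)
  qed
  have "real (R + 1) * V R powr (1 - s / d) = (\<Sum>r\<in>{R..2 * R}. V R powr (1 - s / d))" by simp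
  also have "\<dots> \<le> (\<Sum>r\<in>{R..2 * R}. V r powr (1 - s / d))"
    using card_sublevel_mono[OF fin] s d
    by (intro sum_mono powr_mono2) (auto simp: V_def divide_simps)
  also have "\<dots> \<le> (\<Sum>r\<in>{R..2 * R}. K * ?S r)"
    using H R by (intro sum_mono) auto
  also have "\<dots> \<le> K * (\<Sum>r\<le>2 * R. ?S r)"
    unfolding sum_distrib_left[symmetric] using K
    by (intro mult_left_mono sum_mono2) (auto intro!: sum_nonneg)
  also have "\<dots> \<le> K * (V (2 * R) * (real (2 * R + 1) powr (1 - s) / (1 - s)))"
    using K sum_sublevel_powr_le[OF fin s, where g = g and N = "2 * R"] unfolding V_def
    by (intro mult_left_mono) auto
  also have "\<dots> \<le> K * (V (2 * R) * (3 * real R powr (1 - s) / (1 - s)))"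
    using K s three by (intro mult_left_mono divide_right_mono) (auto simp: V_def)
  finally show ?thesis using s K unfolding doubling_const_def by (simp add: field_simps)
qed

lemma sublevel_doubling:
  fixes B :: "'a set" and g :: "'a \<Rightarrow> nat" and d L R :: nat
  defines "V \<equiv> \<lambda>r. real (card (sublevel B g r))"
  assumes fin: "finite B" and s: "0 < s" "s < 1" and d: "1 \<le> d" and K: "0 < K"
    and H: "\<And>r. 1 \<le> r \<Longrightarrow> r \<le> L \<Longrightarrow>
              V r powr (1 - s / d) \<le> K * (\<Sum>i\<in>sublevel B g r. real (r + 1 - g i) powr (-s))"
    and R: "1 \<le> R" "2 * R \<le> L"
  shows "doubling_const K s * real R powr s * V R powr (1 - s / d) \<le> V (2 * R)"
proof -
  let ?c = "doubling_const K s"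
  have Rpos: "0 < real R" using R by simp
  have c: "0 \<le> ?c" unfolding doubling_const_def using s K by simp
  have "real R powr (1 - s) * real R powr s = real R" using Rpos by (simp add: powr_add[symmetric])
  then have "real R powr (1 - s) * (?c * real R powr s * V R powr (1 - s / d))
      = ?c * real R * V R powr (1 - s / d)" by (metis mult.commute mult.left_commute)
  also have "\<dots> \<le> ?c * real (R + 1) * V R powr (1 - s / d)"
    using c by (intro mult_right_mono mult_left_mono) auto
  also have "\<dots> \<le> real R powr (1 - s) * V (2 * R)"
    using sublevel_doubling_sum[OF fin s d K H[unfolded V_def] R] unfolding V_def .
  finally show ?thesis using Rpos by (simp add: mult_le_cancel_left_pos)
qed

lemma dyadic_growth_step:
  fixes c a s R V :: real and d :: nat
  assumes c: "0 < c" and a: "0 < a" "a \<le> (c / 2 ^ d) powr (d / s)"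
    and s: "0 < s" "s < 1" and d: "1 \<le> d" and R: "1 \<le> R" and V: "a * R ^ d \<le> V"
  shows "a * (2 * R) ^ d \<le> c * R powr s * V powr (1 - s / d)"
proof -
  define p where "p = 1 - s / d"
  have p: "0 \<le> p" "s / d + p = 1" using s d unfolding p_def by (auto simp: divide_simps)
  have "a powr (s / d) \<le> ((c / 2 ^ d) powr (d / s)) powr (s / d)"
    using a s d by (intro powr_mono2) auto
  also have "\<dots> = c / 2 ^ d" using s d c by (simp add: powr_powr)
  finally have bound: "a powr (s / d) * 2 ^ d \<le> c" by (simp add: le_divide_eq)
  have "a powr p * a powr (s / d) = a" using a p(2) by (simp add: powr_add[symmetric] add.commute)
  then have "a * 2 ^ d = a powr p * (a powr (s / d) * 2 ^ d)" by (metis mult.assoc)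
  also have "\<dots> \<le> a powr p * c" using bound by (intro mult_left_mono) auto
  finally have a2: "a * 2 ^ d \<le> c * a powr p" by (simp add: mult.commute)
  have Rd: "R powr s * (a * R ^ d) powr p = a powr p * R ^ d"
  proof -
    have "R powr s * (a * R ^ d) powr p = a powr p * R powr (s + d * p)"
      using a R by (simp add: powr_mult powr_realpow[symmetric] powr_powr powr_add)
    also have "s + d * p = d" using d unfolding p_def by (simp add: field_simps)
    finally show ?thesis using R by (simp add: powr_realpow)
  qed
  have "a * (2 * R) ^ d = a * 2 ^ d * R ^ d" by (simp add: power_mult_distrib)
  also have "\<dots> \<le> c * a powr p * R ^ d" using a2 R by (intro mult_right_mono) auto
  also have "\<dots> = c * R powr s * (a * R ^ d) powr p" using Rd by simp
  also have "\<dots> \<le> c * R powr s * V powr p"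
    using a R V p c by (intro mult_left_mono powr_mono2) auto
  finally show ?thesis unfolding p_def .
qed

lemma sublevel_growth_dyadic:
  fixes B :: "'a set" and g :: "'a \<Rightarrow> nat" and d L :: nat
  assumes fin: "finite B" and s: "0 < s" "s < 1" and d: "1 \<le> d" and K: "0 < K"
    and H: "\<And>r. 1 \<le> r \<Longrightarrow> r \<le> L \<Longrightarrow> real (card (sublevel B g r)) powr (1 - s / d)
              \<le> K * (\<Sum>i\<in>sublevel B g r. real (r + 1 - g i) powr (-s))"
    and base: "1 \<le> L \<Longrightarrow> sublevel B g 1 \<noteq> {}"
  shows "2 ^ k \<le> L \<Longrightarrow> dyadic_const K s d * real (2 ^ k) ^ d \<le> real (card (sublevel B g (2 ^ k)))"
proof (induction k)
  case 0
  have "1 \<le> card (sublevel B g 1)"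
    using 0 base finite_sublevel[OF fin] by (simp add: Suc_le_eq card_gt_0_iff)
  then show ?case unfolding dyadic_const_def by simp
next
  case (Suc k)
  have c: "0 < doubling_const K s" unfolding doubling_const_def using s K by simp
  have "dyadic_const K s d * (2 * real (2 ^ k)) ^ d
      \<le> doubling_const K s * real (2 ^ k) powr s * real (card (sublevel B g (2 ^ k))) powr (1 - s / d)"
    using Suc c by (intro dyadic_growth_step[OF c _ _ s d]) (auto simp: dyadic_const_def)
  also have "\<dots> \<le> real (card (sublevel B g (2 * 2 ^ k)))"
    using Suc.prems by (intro sublevel_doubling[OF fin s d K H]) auto
  finally show ?case by simp
qed

lemma sublevel_growth:
  fixes B :: "'a set" and g :: "'a \<Rightarrow> nat" and d L :: nat
  assumes fin: "finite B" and s: "0 < s" "s < 1" and d: "1 \<le> d" and K: "0 < K"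
    and H: "\<And>r. 1 \<le> r \<Longrightarrow> r \<le> L \<Longrightarrow> real (card (sublevel B g r)) powr (1 - s / d)
              \<le> K * (\<Sum>i\<in>sublevel B g r. real (r + 1 - g i) powr (-s))"
    and base: "1 \<le> L \<Longrightarrow> sublevel B g 1 \<noteq> {}"
  shows "dyadic_const K s d / 2 ^ d * real L ^ d \<le> real (card (sublevel B g L))"
proof (cases "L = 0")
  case True
  then show ?thesis using d by (simp add: power_0_left)
next
  case False
  then obtain k where k: "2 ^ k \<le> L" "L < 2 ^ (k + 1)" using ex_power_ivl1[of 2 L] by auto
  have "real L \<le> 2 ^ (k + 1)"
    using k(2) by (metis less_imp_le of_nat_le_iff of_nat_numeral of_nat_power)
  then have "dyadic_const K s d / 2 ^ d * real L ^ d \<le> dyadic_const K s d / 2 ^ d * real (2 ^ (k + 1)) ^ d"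
    by (intro mult_left_mono power_mono) (auto simp: dyadic_const_def)
  also have "\<dots> = dyadic_const K s d * real (2 ^ k) ^ d" by (simp add: power_mult_distrib)
  also have "\<dots> \<le> real (card (sublevel B g (2 ^ k)))"
    by (rule sublevel_growth_dyadic[OF fin s d K H base k(1)])
  also have "\<dots> \<le> real (card (sublevel B g L))" using card_sublevel_mono[OF fin k(1)] by simp
  finally show ?thesis .
qed

section \<open>Lattice sums of the kernel\<close>

definition frac_kernel :: "real \<Rightarrow> int^'n \<Rightarrow> int^'n \<Rightarrow> real" where
  "frac_kernel s i j = real_of_int (l1norm (i - j)) powr (-(real CARD('n) + s))"

definition tail_const :: "real \<Rightarrow> nat \<Rightarrow> real" where
  "tail_const s d = 8 ^ d / (1 - 2 powr (-s))"

definition iso_const :: "real \<Rightarrow> nat \<Rightarrow> real" where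
  "iso_const s d = (2 * real d) powr (-(real d + s))"

lemma two_powr_neg_less_1: "0 < s \<Longrightarrow> (2::real) powr (-s) < 1"
  using gr_one_powr[of 2 s] by (auto simp: powr_minus inverse_less_1_iff)

lemma tail_const_pos: "0 < s \<Longrightarrow> 0 < tail_const s d"
  unfolding tail_const_def using two_powr_neg_less_1 by simp

lemma iso_const_pos: "1 \<le> d \<Longrightarrow> 0 < iso_const s d"
  unfolding iso_const_def by simp

lemma frac_kernel_le_powr:
  assumes "0 < s" "1 \<le> X" "X \<le> real_of_int (linfnorm (j - i))"
  shows "frac_kernel s i (j::int^'n) \<le> X powr (-(real CARD('n) + s))"
proof -
  have "X \<le> real_of_int (l1norm (i - j))"
    using assms(3) linfnorm_le_l1norm[of "i - j"] linfnorm_minus_commute[of i j] by linarith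
  then show ?thesis unfolding frac_kernel_def using assms by (intro powr_mono2') auto
qed

lemma sum_kernel_shell_le:
  fixes i :: "int^'n" and t :: int
  assumes s: "0 < s" and t: "1 \<le> t" and fin: "finite F"
  shows "(\<Sum>j\<in>F \<inter> {j. 2 ^ M * t \<le> linfnorm (j - i) \<and> linfnorm (j - i) < 2 ^ (M + 1) * t}. frac_kernel s i j)
       \<le> 8 ^ CARD('n) * ((2 powr (-s)) ^ M * real_of_int t powr (-s))"
proof -
  define D where "D = {j. 2 ^ M * t \<le> linfnorm (j - i) \<and> linfnorm (j - i) < 2 ^ (M + 1) * t}"
  define X where "X = (2::real) ^ M * real_of_int t"
  have X: "1 \<le> X" unfolding X_def using t one_le_power[of "2::real" M] mult_mono[of 1 _ 1] by fastforce
  then have Xpos: "0 < X" by simp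
  have "card (F \<inter> D) \<le> card {j::int^'n. linfnorm (j - i) \<le> 2 ^ (M + 1) * t}"
    using t by (intro card_mono finite_card_linfnorm_ball) (auto simp: D_def)
  also have "\<dots> = nat (4 * (2 ^ M * t) + 1) ^ CARD('n)"
    using finite_card_linfnorm_ball(2)[of "2 ^ (M + 1) * t" i] t by simp
  finally have "real (card (F \<inter> D)) \<le> real (nat (4 * (2 ^ M * t) + 1) ^ CARD('n))"
    by (rule of_nat_mono)
  also have "\<dots> = (4 * X + 1) ^ CARD('n)" using t by (simp add: X_def)
  also have "\<dots> \<le> (8 * X) ^ CARD('n)" using X by (intro power_mono) auto
  finally have card: "real (card (F \<inter> D)) \<le> (8 * X) ^ CARD('n)" .
  have "(\<Sum>j\<in>F \<inter> D. frac_kernel s i j) \<le> real (card (F \<inter> D)) * X powr (-(real CARD('n) + s))"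
  proof (rule sum_bounded_above)
    fix j assume "j \<in> F \<inter> D"
    then have "2 ^ M * t \<le> linfnorm (j - i)" unfolding D_def by simp
    then have "X \<le> real_of_int (linfnorm (j - i))"
      unfolding X_def by (metis of_int_le_iff of_int_mult of_int_numeral of_int_power)
    then show "frac_kernel s i j \<le> X powr (-(real CARD('n) + s))" by (rule frac_kernel_le_powr[OF s X])
  qed
  also have "\<dots> \<le> (8 * X) ^ CARD('n) * X powr (-(real CARD('n) + s))"
    using card by (rule mult_right_mono) simp
  also have "\<dots> = 8 ^ CARD('n) * X powr (-s)"
  proof -
    have "X ^ CARD('n) * X powr (-(real CARD('n) + s)) = X powr (-s)"
      using Xpos by (simp add: powr_realpow[symmetric] powr_add[symmetric])
    then show ?thesis by (simp add: power_mult_distrib mult.assoc)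
  qed
  also have "X powr (-s) = (2 powr (real M)) powr (-s) * real_of_int t powr (-s)"
    unfolding X_def using t by (simp add: powr_mult powr_realpow)
  also have "(2 powr (real M)) powr (-s) = (2 powr (-s)) ^ M"
    by (simp add: powr_powr mult.commute powr_realpow[symmetric])
  finally show ?thesis unfolding D_def .
qed

lemma sum_kernel_annulus_le:
  fixes i :: "int^'n" and t :: int
  assumes s: "0 < s" and t: "1 \<le> t" and fin: "finite F"
  shows "(\<Sum>j\<in>F \<inter> {j. t \<le> linfnorm (j - i) \<and> linfnorm (j - i) < 2 ^ M * t}. frac_kernel s i j)
       \<le> 8 ^ CARD('n) * real_of_int t powr (-s) * (\<Sum>m<M. (2 powr (-s)) ^ m)"
proof (induction M)
  case 0
  have empty: "F \<inter> {j. t \<le> linfnorm (j - i) \<and> linfnorm (j - i) < 2 ^ 0 * t} = {}" by auto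
  show ?case unfolding empty by simp
next
  case (Suc M)
  let ?U = "\<lambda>M. F \<inter> {j. t \<le> linfnorm (j - i) \<and> linfnorm (j - i) < 2 ^ M * t}"
  let ?D = "F \<inter> {j. 2 ^ M * t \<le> linfnorm (j - i) \<and> linfnorm (j - i) < 2 ^ (M + 1) * t}"
  have "t \<le> 2 ^ M * t" "2 ^ M * t \<le> 2 * 2 ^ M * t" using t by simp_all
  then have "?U (Suc M) = ?U M \<union> ?D" and "?U M \<inter> ?D = {}" by auto
  then have "(\<Sum>j\<in>?U (Suc M). frac_kernel s i j) = (\<Sum>j\<in>?U M. frac_kernel s i j) + (\<Sum>j\<in>?D. frac_kernel s i j)"
    using fin by (simp add: sum.union_disjoint)
  also have "\<dots> \<le> 8 ^ CARD('n) * real_of_int t powr (-s) * (\<Sum>m<M. (2 powr (-s)) ^ m)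
      + 8 ^ CARD('n) * ((2 powr (-s)) ^ M * real_of_int t powr (-s))"
    by (intro add_mono Suc.IH sum_kernel_shell_le[OF s t fin])
  finally show ?case by (simp add: algebra_simps)
qed

lemma sum_kernel_far_le:
  fixes i :: "int^'n" and t :: int
  assumes s: "0 < s" and t: "1 \<le> t" and fin: "finite F"
    and far: "\<And>j. j \<in> F \<Longrightarrow> t \<le> linfnorm (j - i)"
  shows "(\<Sum>j\<in>F. frac_kernel s i j) \<le> tail_const s CARD('n) * real_of_int t powr (-s)"
proof -
  define q where "q = (2::real) powr (-s)"
  have q: "0 < q" "q < 1" unfolding q_def using two_powr_neg_less_1[OF s] by auto
  define N where "N = (\<Sum>j\<in>F. linfnorm (j - i))"
  have N0: "0 \<le> N" unfolding N_def by (simp add: sum_nonneg linfnorm_nonneg)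
  have N: "linfnorm (j - i) < 2 ^ nat N * t" if "j \<in> F" for j
  proof -
    have "linfnorm (j - i) \<le> N" unfolding N_def using fin that by (intro member_le_sum) (auto simp: linfnorm_nonneg)
    also have "\<dots> < 2 ^ nat N" by (metis N0 int_nat_eq less_exp of_nat_less_iff of_nat_numeral of_nat_power)
    also have "\<dots> \<le> 2 ^ nat N * t" using t by simp
    finally show ?thesis .
  qed
  have "(\<Sum>j\<in>F. frac_kernel s i j)
      = (\<Sum>j\<in>F \<inter> {j. t \<le> linfnorm (j - i) \<and> linfnorm (j - i) < 2 ^ nat N * t}. frac_kernel s i j)"
    using far N by (intro sum.cong) auto
  also have "\<dots> \<le> 8 ^ CARD('n) * real_of_int t powr (-s) * (\<Sum>m<nat N. q ^ m)"
    unfolding q_def by (rule sum_kernel_annulus_le[OF s t fin])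
  also have "\<dots> \<le> 8 ^ CARD('n) * real_of_int t powr (-s) * (1 / (1 - q))"
    using q by (intro mult_left_mono) (simp_all add: sum_gp_strict divide_right_mono)
  finally show ?thesis unfolding tail_const_def q_def by simp
qed

lemma card_ball_diff_ge:
  fixes A :: "(int^'n) set"
  assumes fin: "finite A" and R: "real (card A) powr (1 / CARD('n)) \<le> real_of_int R"
  shows "real (card A) \<le> real (card ({j. linfnorm (j - i) \<le> R} - A))"
proof (cases "A = {}")
  case False
  define \<mu> where "\<mu> = real (card A) powr (1 / CARD('n))"
  have \<mu>: "1 \<le> \<mu>" unfolding \<mu>_def using fin False by (intro ge_one_powr_ge_zero) (auto simp: Suc_le_eq card_gt_0_iff)
  have R0: "0 \<le> R" using R \<mu> unfolding \<mu>_def by linarith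
  have "\<mu> ^ CARD('n) = \<mu> powr CARD('n)" using \<mu> by (simp add: powr_realpow)
  also have "\<dots> = real (card A)" unfolding \<mu>_def by (simp add: powr_powr)
  finally have \<mu>d: "\<mu> ^ CARD('n) = real (card A)" .
  have "2 * real (card A) \<le> (2 * \<mu>) ^ CARD('n)"
    unfolding \<mu>d[symmetric] power_mult_distrib
    using \<mu> by (intro mult_right_mono) (auto simp: self_le_power)
  also have "\<dots> \<le> real_of_int (2 * R + 1) ^ CARD('n)"
    using R \<mu> unfolding \<mu>_def by (intro power_mono) auto
  also have "\<dots> = real (card {j::int^'n. linfnorm (j - i) \<le> R})"
  proof -
    have "card {j::int^'n. linfnorm (j - i) \<le> R} = nat (2 * R + 1) ^ CARD('n)"
      by (rule finite_card_linfnorm_ball(2)[OF R0])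
    then show ?thesis using R0 by simp
  qed
  finally have "2 * real (card A) \<le> real (card {j::int^'n. linfnorm (j - i) \<le> R})" .
  moreover have "card {j::int^'n. linfnorm (j - i) \<le> R} - card A \<le> card ({j. linfnorm (j - i) \<le> R} - A)"
    using fin by (rule diff_card_le_card_Diff)
  ultimately show ?thesis by linarith
qed simp

definition iso_radius :: "(int^'n) set \<Rightarrow> int" where
  "iso_radius A = \<lceil>real (card A) powr (1 / CARD('n))\<rceil>"

text \<open>The ball of radius \<open>\<lceil>|A|\<^bsup>1/d\<^esup>\<rceil>\<close> about \<open>i\<close> has at least \<open>2|A|\<close> points, so at least \<open>|A|\<close>
  of them lie outside \<open>A\<close>, each within \<open>\<ell>\<^sup>1\<close>-distance \<open>2d|A|\<^bsup>1/d\<^esup>\<close> of \<open>i\<close>.\<close>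

lemma sum_kernel_ball_diff_ge:
  fixes A :: "(int^'n) set"
  assumes fin: "finite A" and iA: "i \<in> A" and s: "0 < s"
  shows "iso_const s CARD('n) * real (card A) powr (-s / CARD('n))
     \<le> (\<Sum>j \<in> {j. linfnorm (j - i) \<le> iso_radius A} - A. frac_kernel s i j)"
proof -
  define m where "m = card A"
  define \<mu> where "\<mu> = real m powr (1 / CARD('n))"
  define e where "e = real CARD('n) + s"
  have m: "1 \<le> m" unfolding m_def using fin iA by (auto simp: Suc_le_eq card_gt_0_iff)
  have "1 \<le> \<mu>" unfolding \<mu>_def using m by (intro ge_one_powr_ge_zero) auto
  then have \<mu>: "real_of_int (iso_radius A) \<le> 2 * \<mu>"
    unfolding iso_radius_def \<mu>_def m_def by linarith
  have "real m * (2 * real CARD('n) * \<mu>) powr (-e)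
      \<le> real (card ({j. linfnorm (j - i) \<le> iso_radius A} - A)) * (2 * real CARD('n) * \<mu>) powr (-e)"
    using card_ball_diff_ge[OF fin, of "iso_radius A" i] unfolding m_def iso_radius_def
    by (intro mult_right_mono) auto
  also have "\<dots> \<le> (\<Sum>j \<in> {j. linfnorm (j - i) \<le> iso_radius A} - A. frac_kernel s i j)"
  proof (rule sum_bounded_below)
    fix j assume j: "j \<in> {j. linfnorm (j - i) \<le> iso_radius A} - A"
    have "real_of_int (l1norm (i - j)) \<le> real CARD('n) * real_of_int (linfnorm (i - j))"
      using l1norm_le_linfnorm[of "i - j"] by (metis of_int_le_iff of_int_mult of_int_of_nat_eq)
    also have "\<dots> \<le> real CARD('n) * (2 * \<mu>)"
      using j \<mu> linfnorm_minus_commute[of i j] by (intro mult_left_mono) auto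
    finally have "real_of_int (l1norm (i - j)) \<le> 2 * real CARD('n) * \<mu>" by simp
    moreover have "1 \<le> l1norm (i - j)"
      using j iA linfnorm_diff_ge_1[of i j] linfnorm_le_l1norm[of "i - j"] by fastforce
    ultimately show "(2 * real CARD('n) * \<mu>) powr (-e) \<le> frac_kernel s i j"
      unfolding frac_kernel_def e_def using s by (intro powr_mono2') auto
  qed
  also have "real m * (2 * real CARD('n) * \<mu>) powr (-e) = iso_const s CARD('n) * real m powr (-s / CARD('n))"
  proof -
    have "\<mu> powr (-e) = real m powr (-e / CARD('n))" unfolding \<mu>_def by (simp add: powr_powr)
    moreover have "real m = real m powr 1" using m by simp
    ultimately have "real m * \<mu> powr (-e) = real m powr (1 + -e / CARD('n))" by (metis powr_add)
    also have "1 + -e / CARD('n) = -s / CARD('n)" unfolding e_def by (simp add: field_simps)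
    finally show ?thesis unfolding iso_const_def e_def by (simp add: powr_mult)
  qed
  finally show ?thesis unfolding m_def .
qed

lemma isoperimetric_kernel_sum_ge:
  fixes A :: "(int^'n) set"
  assumes fin: "finite A" and s: "0 < s"
  shows "iso_const s CARD('n) * real (card A) powr (1 - s / CARD('n))
     \<le> (\<Sum>i\<in>A. \<Sum>j \<in> {j. linfnorm (j - i) \<le> iso_radius A} - A. frac_kernel s i j)"
proof -
  have le: "real (card A) * (iso_const s CARD('n) * real (card A) powr (-s / CARD('n)))
      \<le> (\<Sum>i\<in>A. \<Sum>j \<in> {j. linfnorm (j - i) \<le> iso_radius A} - A. frac_kernel s i j)"
    by (rule sum_bounded_below) (rule sum_kernel_ball_diff_ge[OF fin _ s])
  have "real (card A) * real (card A) powr (-s / CARD('n)) = real (card A) powr (1 - s / CARD('n))"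
  proof (cases "card A = 0")
    case False
    then show ?thesis by (simp add: powr_diff powr_minus divide_inverse)
  qed simp
  then have "iso_const s CARD('n) * real (card A) powr (1 - s / CARD('n))
      = real (card A) * (iso_const s CARD('n) * real (card A) powr (-s / CARD('n)))"
    by (metis mult.left_commute)
  with le show ?thesis by (simp only:)
qed

section \<open>Interactions between sets of sites\<close>

definition interaction :: "('a \<Rightarrow> 'a \<Rightarrow> real) \<Rightarrow> ('a \<times> 'a) set \<Rightarrow> ennreal" where
  "interaction J P = infsum (\<lambda>p. ennreal (J (fst p) (snd p))) P"

lemma interaction_le_ennreal:
  assumes "\<And>P. finite P \<Longrightarrow> P \<subseteq> S \<Longrightarrow> (\<Sum>p\<in>P. J (fst p) (snd p)) \<le> B"
    and "\<forall>i j. 0 \<le> J i j"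
  shows "interaction J S \<le> ennreal B"
proof -
  have "interaction J S = (SUP P\<in>{P. finite P \<and> P \<subseteq> S}. \<Sum>p\<in>P. ennreal (J (fst p) (snd p)))"
    unfolding interaction_def by (rule nonneg_infsum_complete) simp
  also have "\<dots> \<le> ennreal B"
  proof (rule SUP_least, clarify)
    fix P assume "finite P" "P \<subseteq> S"
    then show "(\<Sum>p\<in>P. ennreal (J (fst p) (snd p))) \<le> ennreal B"
      using assms by (subst sum_ennreal) (auto intro: ennreal_leI)
  qed
  finally show ?thesis .
qed

lemma sum_le_interaction:
  assumes "finite P" "P \<subseteq> S" "\<forall>i j. 0 \<le> J i j"
  shows "ennreal (\<Sum>p\<in>P. J (fst p) (snd p)) \<le> interaction J S"
proof -
  have "ennreal (\<Sum>p\<in>P. J (fst p) (snd p)) = infsum (\<lambda>p. ennreal (J (fst p) (snd p))) P"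
    using assms by (simp add: sum_ennreal)
  also have "\<dots> \<le> interaction J S"
    unfolding interaction_def using assms(2)
    by (intro infsum_mono_neutral) (auto intro: nonneg_summable_on_complete)
  finally show ?thesis .
qed

lemma interaction_mono: "P \<subseteq> S \<Longrightarrow> interaction J P \<le> interaction J S"
  unfolding interaction_def by (intro infsum_mono_neutral) (auto intro: nonneg_summable_on_complete)

lemma interaction_Un_disjoint:
  "P \<inter> S = {} \<Longrightarrow> interaction J (P \<union> S) = interaction J P + interaction J S"
  unfolding interaction_def by (intro infsum_Un_disjoint) (auto intro: nonneg_summable_on_complete)

lemma interaction_Un_le: "interaction J (P \<union> S) \<le> interaction J P + interaction J S"
proof -
  have "interaction J (P \<union> S) = interaction J P + interaction J (S - P)"
    by (metis Diff_disjoint Un_Diff_cancel interaction_Un_disjoint)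
  also have "\<dots> \<le> interaction J P + interaction J S" by (intro add_left_mono interaction_mono) auto
  finally show ?thesis .
qed

lemma interaction_swap:
  assumes "J1 J"
  shows "interaction J (prod.swap ` P) = interaction J P"
proof -
  have "(\<lambda>p. ennreal (J (fst p) (snd p))) \<circ> prod.swap = (\<lambda>p. ennreal (J (fst p) (snd p)))"
    using assms unfolding J1_def by (auto simp: fun_eq_iff)
  then show ?thesis unfolding interaction_def by (simp add: infsum_reindex)
qed

lemma JP_lower: "JP s lam Lam J \<Longrightarrow> i \<noteq> j \<Longrightarrow> lam * frac_kernel s i j \<le> J i j"
  unfolding JP_def frac_kernel_def by auto

lemma JP_upper: "JP s lam Lam J \<Longrightarrow> i \<noteq> j \<Longrightarrow> J i j \<le> Lam * frac_kernel s i j"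
  unfolding JP_def frac_kernel_def by auto

lemma JP_row_sum_le:
  fixes J :: "int^'n \<Rightarrow> int^'n \<Rightarrow> real" and t :: int
  assumes JP: "JP s lam Lam J" and J2: "J2 J" and Lam: "0 < Lam" and s: "0 < s" and t: "1 \<le> t"
    and fin: "finite F" and far: "\<And>j. j \<in> F \<Longrightarrow> j \<noteq> i \<Longrightarrow> t \<le> linfnorm (j - i)"
  shows "(\<Sum>j\<in>F. J i j) \<le> Lam * tail_const s CARD('n) * real_of_int t powr (-s)"
proof -
  have "(\<Sum>j\<in>F. J i j) = (\<Sum>j\<in>F - {i}. J i j)"
    using J2 fin unfolding J2_def by (intro sum.mono_neutral_right) auto
  also have "\<dots> \<le> (\<Sum>j\<in>F - {i}. Lam * frac_kernel s i j)"
    using JP by (intro sum_mono JP_upper) auto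
  also have "\<dots> = Lam * (\<Sum>j\<in>F - {i}. frac_kernel s i j)" by (rule sum_distrib_left[symmetric])
  also have "\<dots> \<le> Lam * (tail_const s CARD('n) * real_of_int t powr (-s))"
    using fin far Lam by (intro mult_left_mono sum_kernel_far_le[OF s t]) auto
  finally show ?thesis by (simp only: mult.assoc)
qed

lemma interaction_Sigma_le:
  fixes J :: "int^'n \<Rightarrow> int^'n \<Rightarrow> real" and t :: "int^'n \<Rightarrow> int"
  assumes JP: "JP s lam Lam J" and J2: "J2 J" and Jnn: "\<forall>i j. 0 \<le> J i j" and Lam: "0 < Lam"
    and s: "0 < s" and finA: "finite A" and t: "\<And>i. i \<in> A \<Longrightarrow> 1 \<le> t i"
    and far: "\<And>i j. i \<in> A \<Longrightarrow> j \<in> T i \<Longrightarrow> j \<noteq> i \<Longrightarrow> t i \<le> linfnorm (j - i)"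
  shows "interaction J (Sigma A T) \<le> ennreal (Lam * tail_const s CARD('n) * (\<Sum>i\<in>A. real_of_int (t i) powr (-s)))"
proof (rule interaction_le_ennreal[OF _ Jnn])
  fix P assume P: "finite P" "P \<subseteq> Sigma A T"
  define Y where "Y = snd ` P"
  have finY: "finite Y" unfolding Y_def using P by auto
  have "(\<Sum>p\<in>P. J (fst p) (snd p)) \<le> (\<Sum>p\<in>Sigma A (\<lambda>i. T i \<inter> Y). J (fst p) (snd p))"
    using P Jnn finA finY unfolding Y_def by (intro sum_mono2) (auto intro: finite_SigmaI, force)
  also have "\<dots> = (\<Sum>i\<in>A. \<Sum>j\<in>T i \<inter> Y. J i j)"
    using finA finY by (subst sum.Sigma) (auto simp: case_prod_beta)
  also have "\<dots> \<le> (\<Sum>i\<in>A. Lam * tail_const s CARD('n) * real_of_int (t i) powr (-s))"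
    using finY t far by (intro sum_mono JP_row_sum_le[OF JP J2 Lam s]) auto
  finally show "(\<Sum>p\<in>P. J (fst p) (snd p)) \<le> Lam * tail_const s CARD('n) * (\<Sum>i\<in>A. real_of_int (t i) powr (-s))"
    by (simp add: sum_distrib_left mult.assoc)
qed

lemma interaction_complement_ge:
  fixes J :: "int^'n \<Rightarrow> int^'n \<Rightarrow> real" and A :: "(int^'n) set"
  assumes JP: "JP s lam Lam J" and Jnn: "\<forall>i j. 0 \<le> J i j" and lam: "0 < lam" and s: "0 < s"
    and finA: "finite A"
  shows "ennreal (lam * iso_const s CARD('n) * real (card A) powr (1 - s / CARD('n)))
     \<le> interaction J (A \<times> (UNIV - A))"
proof -
  define C where "C = (\<lambda>i::int^'n. {j. linfnorm (j - i) \<le> iso_radius A} - A)"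
  have "0 \<le> iso_radius A"
    unfolding iso_radius_def zero_le_ceiling using powr_ge_zero[of "real (card A)"] by (metis less_le_trans neg_less_0_iff_less zero_less_one)
  then have finC: "\<And>i. finite (C i)" unfolding C_def using finite_card_linfnorm_ball(1) by auto
  have "lam * iso_const s CARD('n) * real (card A) powr (1 - s / CARD('n))
      \<le> lam * (\<Sum>i\<in>A. \<Sum>j\<in>C i. frac_kernel s i j)"
    unfolding C_def mult.assoc using lam by (intro mult_left_mono isoperimetric_kernel_sum_ge[OF finA s]) auto
  also have "\<dots> \<le> (\<Sum>i\<in>A. \<Sum>j\<in>C i. J i j)"
    unfolding sum_distrib_left using JP by (intro sum_mono JP_lower) (auto simp: C_def)
  also have "\<dots> = (\<Sum>p\<in>Sigma A C. J (fst p) (snd p))"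
    using finA finC by (subst sum.Sigma) (auto simp: case_prod_beta)
  finally have "ennreal (lam * iso_const s CARD('n) * real (card A) powr (1 - s / CARD('n)))
      \<le> ennreal (\<Sum>p\<in>Sigma A C. J (fst p) (snd p))" by (rule ennreal_leI)
  also have "\<dots> \<le> interaction J (A \<times> (UNIV - A))"
    using finA finC Jnn by (intro sum_le_interaction) (auto simp: C_def)
  finally show ?thesis .
qed

section \<open>Comparison with the flipped configuration\<close>

definition pair_energy :: "('a \<Rightarrow> 'a \<Rightarrow> real) \<Rightarrow> ('a \<Rightarrow> int) \<Rightarrow> 'a \<times> 'a \<Rightarrow> ennreal" where
  "pair_energy J w p = ennreal (J (fst p) (snd p) * (1 - real_of_int (w (fst p) * w (snd p))))"

lemma Hen_eq_infsum_pair_energy: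
  "Hen J \<Gamma> w = infsum (pair_energy J w) (\<Gamma> \<times> UNIV \<union> UNIV \<times> \<Gamma>)"
proof -
  have "UNIV - (UNIV - \<Gamma>) \<times> (UNIV - \<Gamma>) = \<Gamma> \<times> UNIV \<union> UNIV \<times> \<Gamma>" by auto
  then show ?thesis unfolding Hen_def pair_energy_def by simp
qed

lemma Hen_split:
  assumes "A \<subseteq> \<Gamma>"
  shows "Hen J \<Gamma> w = Hen J A w
    + infsum (pair_energy J w) ((\<Gamma> \<times> UNIV \<union> UNIV \<times> \<Gamma>) - (A \<times> UNIV \<union> UNIV \<times> A))"
proof -
  have "\<Gamma> \<times> UNIV \<union> UNIV \<times> \<Gamma>
      = (A \<times> UNIV \<union> UNIV \<times> A) \<union> ((\<Gamma> \<times> UNIV \<union> UNIV \<times> \<Gamma>) - (A \<times> UNIV \<union> UNIV \<times> A))"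
    using assms by auto
  then show ?thesis unfolding Hen_eq_infsum_pair_energy
    by (metis Diff_disjoint infsum_Un_disjoint nonneg_summable_on_complete zero_le)
qed

text \<open>Every pair across the boundary of \<open>A\<close> is counted in both orders and carries the weight
  \<open>1 - w\<^sub>i w\<^sub>j = 2\<close>.\<close>

lemma Hen_const_on:
  fixes J :: "int^'n \<Rightarrow> int^'n \<Rightarrow> real"
  assumes Jnn: "\<forall>i j. 0 \<le> J i j" and J1: "J1 J" and cfg: "is_config w"
    and c: "c = 1 \<or> c = -1" and wA: "\<And>i. i \<in> A \<Longrightarrow> w i = c"
  shows "Hen J A w = 4 * interaction J (A \<times> {j. w j = - c})"
proof -
  have sm: "\<And>X. pair_energy J w summable_on X" by (rule nonneg_summable_on_complete) simp
  have inner: "infsum (pair_energy J w) (A \<times> A) = 0"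
    using c wA by (subst infsum_0) (auto simp: pair_energy_def)
  have "infsum (pair_energy J w) ((UNIV - A) \<times> A) = infsum (pair_energy J w \<circ> prod.swap) (A \<times> (UNIV - A))"
    by (simp add: infsum_reindex[symmetric] product_swap)
  also have "pair_energy J w \<circ> prod.swap = pair_energy J w"
    using J1 unfolding pair_energy_def J1_def by (auto simp: fun_eq_iff mult.commute)
  finally have swap: "infsum (pair_energy J w) ((UNIV - A) \<times> A) = infsum (pair_energy J w) (A \<times> (UNIV - A))" .
  have decomp: "A \<times> UNIV \<union> UNIV \<times> A = A \<times> (UNIV - A) \<union> (((UNIV - A) \<times> A) \<union> A \<times> A)" by auto
  have "Hen J A w = infsum (pair_energy J w) (A \<times> (UNIV - A))
      + (infsum (pair_energy J w) ((UNIV - A) \<times> A) + infsum (pair_energy J w) (A \<times> A))"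
    unfolding Hen_eq_infsum_pair_energy decomp
    by (subst infsum_Un_disjoint, (auto intro: sm)[3], subst infsum_Un_disjoint, auto intro: sm)
  also have "\<dots> = 2 * infsum (pair_energy J w) (A \<times> (UNIV - A))"
    unfolding inner swap by (simp add: mult_2)
  also have "infsum (pair_energy J w) (A \<times> (UNIV - A))
      = infsum (\<lambda>p. 2 * ennreal (J (fst p) (snd p))) (A \<times> {j. w j = - c})"
  proof (rule infsum_cong_neutral)
    fix p assume "p \<in> A \<times> (UNIV - A) - A \<times> {j. w j = - c}"
    then have "w (fst p) = c" "w (snd p) = c" using wA cfg c unfolding is_config_def by (cases p, force)+
    then show "pair_energy J w p = 0" unfolding pair_energy_def using c by auto
  next
    fix p assume "p \<in> A \<times> {j. w j = - c} - A \<times> (UNIV - A)"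
    then show "2 * ennreal (J (fst p) (snd p)) = 0" using wA c by force
  next
    fix p assume "p \<in> A \<times> (UNIV - A) \<inter> A \<times> {j. w j = - c}"
    then have "w (fst p) * w (snd p) = -1" using wA c by auto
    then show "pair_energy J w p = 2 * ennreal (J (fst p) (snd p))"
      unfolding pair_energy_def using Jnn by (simp add: ennreal_mult'' mult.commute)
  qed
  also have "\<dots> = 2 * interaction J (A \<times> {j. w j = - c})"
    unfolding interaction_def mult_2 by (rule infsum_add) (auto intro: nonneg_summable_on_complete)
  finally show ?thesis by (simp add: mult.assoc)
qed

lemma minimizer_interaction_le:
  fixes J :: "int^'n \<Rightarrow> int^'n \<Rightarrow> real"
  assumes Jnn: "\<forall>i j. 0 \<le> J i j" and J1: "J1 J" and cfg: "is_config u" and min: "minimizer J \<Gamma> u"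
    and A\<Gamma>: "A \<subseteq> \<Gamma>" and Au: "\<And>i. i \<in> A \<Longrightarrow> u i = -1" and fin: "Hen J \<Gamma> u < top"
  shows "interaction J (A \<times> (UNIV - A)) \<le> 2 * interaction J (A \<times> ({i. u i = -1} - A))"
proof -
  define v where "v = (\<lambda>i. if i \<in> A then 1 else u i)"
  define Rest where "Rest = (\<Gamma> \<times> UNIV \<union> UNIV \<times> \<Gamma>) - (A \<times> UNIV \<union> UNIV \<times> A)"
  have cfgv: "is_config v" using cfg unfolding v_def is_config_def by auto
  have "\<forall>i. i \<notin> \<Gamma> \<longrightarrow> v i = u i" using A\<Gamma> unfolding v_def by auto
  then have "Hen J \<Gamma> u \<le> Hen J \<Gamma> v" using min cfgv unfolding minimizer_def by blast
  moreover have "Hen J \<Gamma> u = 4 * interaction J (A \<times> {i. u i = 1}) + infsum (pair_energy J u) Rest"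
    unfolding Rest_def Hen_split[OF A\<Gamma>] using Hen_const_on[OF Jnn J1 cfg, of "-1" A] Au by simp
  moreover have "Hen J \<Gamma> v = 4 * interaction J (A \<times> ({i. u i = -1} - A)) + infsum (pair_energy J u) Rest"
  proof -
    have "{j. v j = - 1} = {i. u i = -1} - A" unfolding v_def by auto
    moreover have "infsum (pair_energy J v) Rest = infsum (pair_energy J u) Rest"
      unfolding Rest_def by (rule infsum_cong) (auto simp: pair_energy_def v_def)
    ultimately show ?thesis
      unfolding Rest_def Hen_split[OF A\<Gamma>] using Hen_const_on[OF Jnn J1 cfgv, of 1 A] by (simp add: v_def)
  qed
  moreover have "infsum (pair_energy J u) Rest \<noteq> top"
    using fin unfolding Rest_def Hen_split[OF A\<Gamma>] by (simp add: less_top)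
  ultimately have "4 * interaction J (A \<times> {i. u i = 1}) \<le> 4 * interaction J (A \<times> ({i. u i = -1} - A))"
    by (simp add: add.commute ennreal_add_left_cancel_le)
  then have le: "interaction J (A \<times> {i. u i = 1}) \<le> interaction J (A \<times> ({i. u i = -1} - A))"
    by (simp add: ennreal_mult_le_mult_iff)
  have "A \<times> (UNIV - A) = A \<times> {i. u i = 1} \<union> A \<times> ({i. u i = -1} - A)"
    using cfg Au unfolding is_config_def by auto
  moreover have "A \<times> {i. u i = 1} \<inter> A \<times> ({i. u i = -1} - A) = {}" by auto
  ultimately have "interaction J (A \<times> (UNIV - A))
      = interaction J (A \<times> {i. u i = 1}) + interaction J (A \<times> ({i. u i = -1} - A))"
    by (simp add: interaction_Un_disjoint)
  also have "\<dots> \<le> 2 * interaction J (A \<times> ({i. u i = -1} - A))" using le by (simp add: mult_2 add_right_mono)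
  finally show ?thesis .
qed

lemma Hen_le_interaction:
  fixes J :: "int^'n \<Rightarrow> int^'n \<Rightarrow> real"
  assumes Jnn: "\<forall>i j. 0 \<le> J i j" and J1: "J1 J" and cfg: "is_config u"
  shows "Hen J \<Gamma> u \<le> 4 * interaction J (\<Gamma> \<times> UNIV)"
proof -
  have sm: "\<And>X f. (f :: _ \<Rightarrow> ennreal) summable_on X" by (rule nonneg_summable_on_complete) simp
  have "Hen J \<Gamma> u \<le> infsum (\<lambda>p. 2 * ennreal (J (fst p) (snd p))) (\<Gamma> \<times> UNIV \<union> UNIV \<times> \<Gamma>)"
    unfolding Hen_eq_infsum_pair_energy
  proof (rule infsum_mono[OF sm sm])
    fix p
    have "u (fst p) \<in> {-1, 1}" "u (snd p) \<in> {-1, 1}" using cfg unfolding is_config_def by auto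
    then have "-1 \<le> real_of_int (u (fst p) * u (snd p))" by auto
    then have "J (fst p) (snd p) * (1 - real_of_int (u (fst p) * u (snd p))) \<le> J (fst p) (snd p) * 2"
      using Jnn by (intro mult_left_mono) auto
    then have "pair_energy J u p \<le> ennreal (J (fst p) (snd p) * 2)"
      unfolding pair_energy_def by (rule ennreal_leI)
    also have "\<dots> = 2 * ennreal (J (fst p) (snd p))" using Jnn by (simp add: ennreal_mult mult.commute)
    finally show "pair_energy J u p \<le> 2 * ennreal (J (fst p) (snd p))" .
  qed
  also have "\<dots> = 2 * interaction J (\<Gamma> \<times> UNIV \<union> UNIV \<times> \<Gamma>)"
    unfolding interaction_def mult_2 by (rule infsum_add) (rule sm)+
  also have "\<dots> \<le> 2 * (2 * interaction J (\<Gamma> \<times> UNIV))"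
  proof (rule mult_left_mono)
    have "interaction J (UNIV \<times> \<Gamma>) = interaction J (\<Gamma> \<times> UNIV)"
      using interaction_swap[OF J1, of "\<Gamma> \<times> UNIV"] by (simp add: product_swap)
    then show "interaction J (\<Gamma> \<times> UNIV \<union> UNIV \<times> \<Gamma>) \<le> 2 * interaction J (\<Gamma> \<times> UNIV)"
      using interaction_Un_le[of J "\<Gamma> \<times> UNIV" "UNIV \<times> \<Gamma>"] by (simp add: mult_2)
  qed simp
  finally show ?thesis by (simp add: mult.assoc[symmetric])
qed

lemma Hen_less_top:
  fixes J :: "int^'n \<Rightarrow> int^'n \<Rightarrow> real"
  assumes JP: "JP s lam Lam J" and J1: "J1 J" and J2: "J2 J" and Jnn: "\<forall>i j. 0 \<le> J i j"
    and Lam: "0 < Lam" and s: "0 < s" and fin: "finite \<Gamma>" and cfg: "is_config u"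
  shows "Hen J \<Gamma> u < top"
proof -
  have "interaction J (\<Gamma> \<times> UNIV) \<le> ennreal (Lam * tail_const s CARD('n) * (\<Sum>i\<in>\<Gamma>. real_of_int 1 powr (-s)))"
    by (rule interaction_Sigma_le[OF JP J2 Jnn Lam s fin]) (auto intro: linfnorm_diff_ge_1)
  then have "interaction J (\<Gamma> \<times> UNIV) < top" by (simp add: order_le_less_trans)
  then show ?thesis
    using Hen_le_interaction[OF Jnn J1 cfg, of \<Gamma>] by (simp add: ennreal_mult_less_top order_le_less_trans)
qed

definition sublevel_const :: "real \<Rightarrow> real \<Rightarrow> real \<Rightarrow> nat \<Rightarrow> real" where
  "sublevel_const lam Lam s d = 2 * Lam * tail_const s d / (lam * iso_const s d)"

lemma sublevel_const_pos:
  "0 < lam \<Longrightarrow> 0 < Lam \<Longrightarrow> 0 < s \<Longrightarrow> 1 \<le> d \<Longrightarrow> 0 < sublevel_const lam Lam s d"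
  unfolding sublevel_const_def using tail_const_pos iso_const_pos by simp

lemma minimizer_sublevel_bound:
  fixes J :: "int^'n \<Rightarrow> int^'n \<Rightarrow> real" and u :: "int^'n \<Rightarrow> int" and q :: "int^'n"
  assumes Jnn: "\<forall>i j. 0 \<le> J i j" and J1: "J1 J" and J2: "J2 J" and JP: "JP s lam Lam J"
    and lam: "0 < lam" and Lam: "0 < Lam" and s: "0 < s"
    and cfg: "is_config u" and min: "minimizer J (cube l q) u" and rl: "r \<le> l"
  defines "A \<equiv> {i. u i = -1} \<inter> cube r q"
  shows "real (card A) powr (1 - s / CARD('n))
     \<le> sublevel_const lam Lam s CARD('n) * (\<Sum>i\<in>A. real_of_int (int r + 1 - linfnorm (i - q)) powr (-s))"
proof -
  define S where "S = (\<Sum>i\<in>A. real_of_int (int r + 1 - linfnorm (i - q)) powr (-s))"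
  have finA: "finite A" unfolding A_def using finite_cube by auto
  have "0 \<le> S" unfolding S_def by (simp add: sum_nonneg)
  then have nonneg: "0 \<le> 2 * (Lam * tail_const s CARD('n) * S)"
    using Lam tail_const_pos[OF s, of "CARD('n)"] by (intro mult_nonneg_nonneg) auto
  have tail: "interaction J (A \<times> ({i. u i = -1} - A)) \<le> ennreal (Lam * tail_const s CARD('n) * S)"
  proof -
    have "interaction J (A \<times> ({i. u i = -1} - A)) \<le> interaction J (Sigma A (\<lambda>_. UNIV - cube r q))"
      by (rule interaction_mono) (auto simp: A_def)
    also have "\<dots> \<le> ennreal (Lam * tail_const s CARD('n) * S)"
      unfolding S_def
    proof (rule interaction_Sigma_le[OF JP J2 Jnn Lam s finA])
      fix i j assume "i \<in> A" "j \<in> UNIV - cube r q"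
      moreover have "linfnorm (j - q) \<le> linfnorm (j - i) + linfnorm (i - q)"
        using linfnorm_triangle[of "j - i" "i - q"] by simp
      ultimately show "int r + 1 - linfnorm (i - q) \<le> linfnorm (j - i)" unfolding A_def cube_def by auto
    qed (auto simp: A_def cube_def)
    finally show ?thesis .
  qed
  have "A \<subseteq> cube l q" unfolding A_def cube_def using rl by auto
  then have "ennreal (lam * iso_const s CARD('n) * real (card A) powr (1 - s / CARD('n)))
      \<le> 2 * interaction J (A \<times> ({i. u i = -1} - A))"
    using interaction_complement_ge[OF JP Jnn lam s finA] minimizer_interaction_le[OF Jnn J1 cfg min]
      Hen_less_top[OF JP J1 J2 Jnn Lam s finite_cube cfg]
    by (auto simp: A_def intro: order_trans)
  also have "\<dots> \<le> 2 * ennreal (Lam * tail_const s CARD('n) * S)"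
    using tail by (rule mult_left_mono) simp
  also have "\<dots> = ennreal (2 * (Lam * tail_const s CARD('n) * S))"
    by (simp add: ennreal_mult')
  finally have "lam * iso_const s CARD('n) * real (card A) powr (1 - s / CARD('n))
      \<le> 2 * (Lam * tail_const s CARD('n) * S)"
    using nonneg by (subst (asm) ennreal_le_iff) auto
  then show ?thesis
    unfolding S_def[symmetric] sublevel_const_def
    using lam iso_const_pos[of "CARD('n)" s] by (simp add: field_simps)
qed

definition density_const :: "real \<Rightarrow> real \<Rightarrow> real \<Rightarrow> nat \<Rightarrow> real" where
  "density_const lam Lam s d = dyadic_const (sublevel_const lam Lam s d) s d / 2 ^ d"

lemma density_const_pos:
  "0 < lam \<Longrightarrow> 0 < Lam \<Longrightarrow> 0 < s \<Longrightarrow> s < 1 \<Longrightarrow> 1 \<le> d \<Longrightarrow> 0 < density_const lam Lam s d"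
  unfolding density_const_def by (simp add: dyadic_const_pos sublevel_const_pos)

lemma minimizer_card_minus_ge:
  fixes J :: "int^'n \<Rightarrow> int^'n \<Rightarrow> real" and u :: "int^'n \<Rightarrow> int" and q :: "int^'n"
  assumes Jnn: "\<forall>i j. 0 \<le> J i j" and J1: "J1 J" and J2: "J2 J" and JP: "JP s lam Lam J"
    and lam: "0 < lam" and Lam: "0 < Lam" and s: "0 < s" "s < 1"
    and cfg: "is_config u" and min: "minimizer J (cube l q) u"
    and p: "u p = -1" "linfnorm (p - q) \<le> 1"
  shows "density_const lam Lam s CARD('n) * real l ^ CARD('n) \<le> real (card ({i. u i = -1} \<inter> cube l q))"
proof -
  define B where "B = {i. u i = -1} \<inter> cube l q"
  define g where "g = (\<lambda>i. nat (linfnorm (i - q)))"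
  have finB: "finite B" unfolding B_def using finite_cube by auto
  have sub: "sublevel B g r = {i. u i = -1} \<inter> cube r q" if "r \<le> l" for r
    unfolding sublevel_def B_def g_def cube_def using that linfnorm_nonneg by (auto simp: nat_le_iff)
  have K: "0 < sublevel_const lam Lam s CARD('n)" using sublevel_const_pos[OF lam Lam s(1)] by simp
  have "real (card (sublevel B g r)) powr (1 - s / CARD('n))
      \<le> sublevel_const lam Lam s CARD('n) * (\<Sum>i\<in>sublevel B g r. real (r + 1 - g i) powr (-s))"
    if "r \<le> l" for r
  proof -
    have "(\<Sum>i\<in>sublevel B g r. real_of_int (int r + 1 - linfnorm (i - q)) powr (-s))
        = (\<Sum>i\<in>sublevel B g r. real (r + 1 - g i) powr (-s))"
    proof (rule sum.cong)
      fix i assume "i \<in> sublevel B g r"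
      then have "linfnorm (i - q) \<le> int r" using sub[OF that] by (simp add: cube_def)
      then show "real_of_int (int r + 1 - linfnorm (i - q)) powr (-s) = real (r + 1 - g i) powr (-s)"
        unfolding g_def using linfnorm_nonneg[of "i - q"] by (simp add: of_nat_diff nat_le_iff add.commute)
    qed simp
    then show ?thesis
      unfolding sub[OF that] using minimizer_sublevel_bound[OF Jnn J1 J2 JP lam Lam s(1) cfg min that] by simp
  qed
  moreover have "sublevel B g 1 \<noteq> {}" if "1 \<le> l"
    using p sub[OF that] unfolding cube_def by auto
  ultimately have "density_const lam Lam s CARD('n) * real l ^ CARD('n) \<le> real (card (sublevel B g l))"
    unfolding density_const_def by (intro sublevel_growth[OF finB s _ K]) (auto simp: Suc_le_eq)
  then show ?thesis using sub[of l] by simp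
qed

lemma bdry_minus_neighbour:
  assumes "q \<in> bdry u"
  obtains p where "u p = -1" and "linfnorm (p - (q::int^'n)) \<le> 1"
proof -
  from assms obtain p where "u p = -1" "l1norm (q - p) = 1" unfolding bdry_def by auto
  moreover have "linfnorm (p - q) \<le> l1norm (q - p)"
    using linfnorm_le_l1norm[of "p - q"] l1norm_minus_commute[of q p] by simp
  ultimately show ?thesis using that by simp
qed

lemma is_config_uminus: "is_config u \<Longrightarrow> is_config (\<lambda>i. - u i)"
  unfolding is_config_def by auto

lemma minimizer_uminus: "minimizer J \<Gamma> u \<Longrightarrow> minimizer J \<Gamma> (\<lambda>i. - u i)"
  unfolding minimizer_def
proof (intro allI impI)
  fix v assume min: "\<forall>v. is_config v \<longrightarrow> (\<forall>i. i \<notin> \<Gamma> \<longrightarrow> v i = u i) \<longrightarrow> Hen J \<Gamma> u \<le> Hen J \<Gamma> v"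
    and v: "is_config v" "\<forall>i. i \<notin> \<Gamma> \<longrightarrow> v i = - u i"
  have "is_config (\<lambda>i. - v i)" using v(1) unfolding is_config_def by auto
  then have "Hen J \<Gamma> u \<le> Hen J \<Gamma> (\<lambda>i. - v i)" using min v(2) by simp
  then show "Hen J \<Gamma> (\<lambda>i. - u i) \<le> Hen J \<Gamma> v" by (simp add: Hen_def)
qed

theorem mainTheorem12:
  fixes s lam Lam :: real
  assumes "CARD('n) \<ge> 2"
    and "0 < s" and "s < 1" and "0 < lam" and "lam \<le> Lam"
  shows "\<exists>c>0. \<forall>(J :: int^'n \<Rightarrow> int^'n \<Rightarrow> real) u q l.
           (\<forall>i j. J i j \<ge> 0) \<longrightarrow> J1 J \<longrightarrow> J2 J \<longrightarrow> J5 J \<longrightarrow> JP s lam Lam J \<longrightarrow>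
           is_config u \<longrightarrow> minimizer J (cube l q) u \<longrightarrow> q \<in> bdry u \<longrightarrow>
           real (min (card ({i. u i = -1} \<inter> cube l q)) (card ({i. u i = 1} \<inter> cube l q)))
             \<ge> c * real l ^ CARD('n)"
proof (intro exI conjI allI impI)
  have Lam: "0 < Lam" using assms by linarith
  show "0 < density_const lam Lam s CARD('n)" using density_const_pos[OF _ Lam] assms by simp
  fix J :: "int^'n \<Rightarrow> int^'n \<Rightarrow> real" and u q l
  assume Jnn: "\<forall>i j. J i j \<ge> 0" and J1: "J1 J" and J2: "J2 J" and "J5 J" and JP: "JP s lam Lam J"
    and cfg: "is_config u" and min: "minimizer J (cube l q) u" and q: "q \<in> bdry u"
  obtain p where "u p = -1" "linfnorm (p - q) \<le> 1" using bdry_minus_neighbour[OF q] .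
  then have "density_const lam Lam s CARD('n) * real l ^ CARD('n) \<le> real (card ({i. u i = -1} \<inter> cube l q))"
    using minimizer_card_minus_ge[OF Jnn J1 J2 JP _ Lam _ _ cfg min, of p] assms by simp
  moreover have "density_const lam Lam s CARD('n) * real l ^ CARD('n) \<le> real (card ({i. u i = 1} \<inter> cube l q))"
    using minimizer_card_minus_ge[OF Jnn J1 J2 JP _ Lam _ _ is_config_uminus[OF cfg] minimizer_uminus[OF min],
        of q] q assms by (simp add: bdry_def)
  ultimately show "density_const lam Lam s CARD('n) * real l ^ CARD('n)
      \<le> real (min (card ({i. u i = -1} \<inter> cube l q)) (card ({i. u i = 1} \<inter> cube l q)))"
    by simp
qed

end
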